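(* A graph $G\in\mathcal{C}_{n,m}$ is Whitney-maximum if and only if it is strong.
   Context: $\mathcal{C}_{n,m}$ denotes the set of all connected simple graphs on $n$ vertices and $m$ edges. For a graph $G$ with vertex set $V$, $\kappa(G)$ is its number of connected components, $r(G)=|V|-\kappa(G)$, $c(G)=|E(G)|-|V|+\kappa(G)$. $\mathcal{S}(G)$ is the set of all spanning subgraphs of $G$. The Whitney polynomial is $W_G(x,y)=\sum_{H\in\mathcal{S}(G)}x^{r(G)-r(H)}y^{c(H)}$. A bivariate polynomial is nonnegative if all its coefficients are nonnegative real numbers. $N_i^{(k)}(G)$ is the number of spanning subgraphs of $G$ with exactly $i$ edges and at most $k$ connected components. A graph $G\in\mathcal{C}_{n,m}$ is strong if $N_i^{(k)}(G)\ge N_i^{(k)}(H)$ for all $H\in\mathcal{C}_{n,m}$, $i\in\{0,\ldots,m\}$, $k\in\{1,\ldots,n\}$. $G\in\mathcal{C}_{n,m}$ is Whitney-maximum if for every $H\in\mathcal{C}_{n,m}$ there is a nonnegative polynomial $Q_H$ with $W_G(x,y)-W_H(x,y)=(1-xy)Q_H(x,y)$. *)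

theory Defs
  imports "HOL-Computational_Algebra.Polynomial"
begin

text \<open>Simple graphs: a finite vertex set V (of naturals) and a set E of 2-element
subsets of V. Spanning subgraphs of (V,E) are (V,F) with F a subset of E.\<close>

definition simple_graph :: "nat set \<Rightarrow> nat set set \<Rightarrow> bool" where
  "simple_graph V E \<longleftrightarrow> finite V \<and> (\<forall>e\<in>E. e \<subseteq> V \<and> card e = 2)"

definition adjrel :: "nat set set \<Rightarrow> (nat \<times> nat) set" where
  "adjrel F = {(u, v). {u, v} \<in> F}"

definition kappa :: "nat set \<Rightarrow> nat set set \<Rightarrow> nat" where
  "kappa V F = card (V // Restr ((adjrel F)\<^sup>*) V)"

definition Cnm :: "nat \<Rightarrow> nat \<Rightarrow> (nat set \<times> nat set set) set" where
  "Cnm n m = {(V, E). simple_graph V E \<and> card V = n \<and> card E = m \<and> kappa V E = 1}"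

definition rk :: "nat set \<Rightarrow> nat set set \<Rightarrow> nat" where
  "rk V F = card V - kappa V F"

definition cyc :: "nat set \<Rightarrow> nat set set \<Rightarrow> nat" where
  "cyc V F = card F + kappa V F - card V"

text \<open>Bivariate polynomials as nested univariate polynomials: the outer variable is y,
the inner variable is x.\<close>
definition varX :: "real poly poly" where "varX = [:[:0, 1:]:]"
definition varY :: "real poly poly" where "varY = [:0, 1:]"

definition whitney :: "nat set \<Rightarrow> nat set set \<Rightarrow> real poly poly" where
  "whitney V E = (\<Sum>F\<in>Pow E. varX ^ (rk V E - rk V F) * varY ^ (cyc V F))"

definition nonneg_poly2 :: "real poly poly \<Rightarrow> bool" where
  "nonneg_poly2 Q \<longleftrightarrow> (\<forall>i j. coeff (coeff Q i) j \<ge> 0)"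

definition whitney_maximum :: "nat \<Rightarrow> nat \<Rightarrow> nat set \<Rightarrow> nat set set \<Rightarrow> bool" where
  "whitney_maximum n m V E \<longleftrightarrow> (V, E) \<in> Cnm n m \<and>
     (\<forall>(V', E') \<in> Cnm n m. \<exists>Q. nonneg_poly2 Q \<and>
        whitney V E - whitney V' E' = (1 - varX * varY) * Q)"

definition Nik :: "nat \<Rightarrow> nat \<Rightarrow> nat set \<Rightarrow> nat set set \<Rightarrow> nat" where
  "Nik i k V E = card {F \<in> Pow E. card F = i \<and> kappa V F \<le> k}"

definition strong :: "nat \<Rightarrow> nat \<Rightarrow> nat set \<Rightarrow> nat set set \<Rightarrow> bool" where
  "strong n m V E \<longleftrightarrow> (V, E) \<in> Cnm n m \<and>
     (\<forall>(V', E') \<in> Cnm n m. \<forall>i \<in> {0..m}. \<forall>k \<in> {1..n}. Nik i k V E \<ge> Nik i k V' E')"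

end

theory Submission
  imports Defs
begin

text \<open>
  For a connected graph \<open>G\<close> on \<open>n\<close> vertices the spanning subgraph \<open>F\<close> contributes the monomial
  \<open>x^(\<kappa>(F) - 1) y^(|F| + \<kappa>(F) - n)\<close> to the Whitney polynomial. Since
  \<open>x^p y^q \<equiv> x^(p+1) y^(q+1)\<close> modulo \<open>1 - xy\<close>, it can be pushed along its diagonal up to
  \<open>x^n y^(|F| + 1)\<close>, so that \<open>W_G = (1 - xy) T_G + x^n \<Sum>_F y^(|F| + 1)\<close>. The remainder
  depends only on \<open>m\<close>, and the coefficient of \<open>x^a y^b\<close> in \<open>T_G\<close> counts the subgraphs whose
  diagonal passes through \<open>(a, b)\<close>, i.e. it is \<open>N_{b+n-a-1}^{(a+1)}(G)\<close>. As \<open>1 - xy\<close> is not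
  a zero divisor, the only candidate for \<open>Q_H\<close> is \<open>T_G - T_H\<close>, which is nonnegative exactly
  when \<open>G\<close> dominates \<open>H\<close> in every \<open>N_i^{(k)}\<close>.
\<close>

lemma quotient_eq_image: "A // r = (\<lambda>x. r``{x}) ` A"
  by (auto simp: quotient_def)

lemma kappa_le_card: "finite V \<Longrightarrow> kappa V F \<le> card V"
  unfolding kappa_def quotient_eq_image by (rule card_image_le)

lemma kappa_pos: "finite V \<Longrightarrow> V \<noteq> {} \<Longrightarrow> 1 \<le> kappa V F"
  unfolding kappa_def quotient_eq_image by (simp add: Suc_le_eq card_gt_0_iff)

lemma kappa_empty: "kappa V {} = card V"
proof -
  have "V // Restr ((adjrel {})\<^sup>*) V = (\<lambda>x. {x}) ` V"
    unfolding quotient_eq_image by (auto simp: adjrel_def)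
  then show ?thesis
    unfolding kappa_def by (simp add: card_image)
qed

lemma sym_rtrancl_adjrel: "sym ((adjrel F)\<^sup>*)"
  by (rule sym_rtrancl) (auto simp: sym_def adjrel_def insert_commute)

lemma equiv_connected: "equiv V (Restr ((adjrel F)\<^sup>*) V)"
  using sym_rtrancl_adjrel[of F]
  by (auto simp: equiv_def refl_on_def sym_def intro: trans_Restr trans_rtrancl)

lemma rtrancl_adjrel_insert_cases:
  assumes "(x, z) \<in> (adjrel (insert {u, v} F))\<^sup>*"
  shows "(x, z) \<in> (adjrel F)\<^sup>* \<or> ((x, u) \<in> (adjrel F)\<^sup>* \<and> (v, z) \<in> (adjrel F)\<^sup>*)
     \<or> ((x, v) \<in> (adjrel F)\<^sup>* \<and> (u, z) \<in> (adjrel F)\<^sup>*)"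
  using assms
proof (induction rule: rtrancl_induct)
  case base
  then show ?case by simp
next
  case (step y z)
  then have "(y, z) \<in> adjrel F \<or> (y = u \<and> z = v) \<or> (y = v \<and> z = u)"
    by (auto simp: adjrel_def doubleton_eq_iff)
  with step.IH show ?case
    by (meson rtrancl.rtrancl_refl rtrancl.rtrancl_into_rtrancl)
qed

lemma kappa_insert_edge:
  assumes "finite V" "u \<in> V" "v \<in> V"
  shows "kappa V F \<le> kappa V (insert {u, v} F) + 1"
proof -
  define A where "A = (adjrel F)\<^sup>*"
  define A' where "A' = (adjrel (insert {u, v} F))\<^sup>*"
  define R where "R = Restr A V"
  define R' where "R' = Restr A' V"
  have eqR: "equiv V R" and eqR': "equiv V R'"
    unfolding R_def R'_def A_def A'_def by (fact equiv_connected)+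
  have "A \<subseteq> A'"
    unfolding A_def A'_def by (rule rtrancl_mono) (auto simp: adjrel_def)
  then have "R \<subseteq> R'"
    unfolding R_def R'_def by auto
  define g where "g C = R'``C" for C
  have g_class: "g (R``{x}) = R'``{x}" if "x \<in> V" for x
    unfolding g_def using that eqR' \<open>R \<subseteq> R'\<close> equiv_class_self[OF eqR that]
    by (auto dest: equiv_class_eq[OF eqR'])
  have "g ` (V//R) = V//R'"
    unfolding quotient_eq_image image_image by (simp add: g_class cong: image_cong)
  \<comment> \<open>only the class of u can merge with another class, namely with that of v\<close>
  have "inj_on g (V//R - {R``{u}})"
  proof (rule inj_onI)
    fix C1 C2 assume C1: "C1 \<in> V//R - {R``{u}}" and C2: "C2 \<in> V//R - {R``{u}}"
      and "g C1 = g C2"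
    obtain x y where xy: "x \<in> V" "y \<in> V" "C1 = R``{x}" "C2 = R``{y}"
      using C1 C2 unfolding quotient_eq_image by auto
    then have "(x, y) \<in> A'"
      using \<open>g C1 = g C2\<close> eq_equiv_class_iff[OF eqR'] g_class unfolding R'_def by auto
    then have "(x, y) \<in> A \<or> (x, u) \<in> A \<or> (y, u) \<in> A"
      using rtrancl_adjrel_insert_cases sym_rtrancl_adjrel
      unfolding A_def A'_def by (meson symD)
    then show "C1 = C2"
      using C1 C2 xy assms(2) eq_equiv_class_iff[OF eqR] unfolding R_def by auto
  qed
  have "finite (V//R)"
    unfolding quotient_eq_image using assms(1) by simp
  then have "card (V//R) \<le> card (V//R - {R``{u}}) + 1"
    by (cases "R``{u} \<in> V//R") (simp_all add: card_Suc_Diff1)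
  also have "card (V//R - {R``{u}}) = card (g ` (V//R - {R``{u}}))"
    using \<open>inj_on g _\<close> by (simp add: card_image)
  also have "\<dots> \<le> card (V//R')"
    using \<open>finite (V//R)\<close> \<open>g ` (V//R) = V//R'\<close>
    by (metis card_mono Diff_subset finite_imageI image_mono)
  finally show ?thesis
    unfolding kappa_def R_def R'_def A_def A'_def by simp
qed

lemma card_le_card_edges_plus_kappa:
  assumes "simple_graph V F"
  shows "card V \<le> card F + kappa V F"
proof -
  have "finite F"
    using assms unfolding simple_graph_def by (meson PowI finite_Pow_iff finite_subset subsetI)
  then show ?thesis
    using assms
  proof (induction F rule: finite_induct)
    case empty
    then show ?case by (simp add: kappa_empty)
  next
    case (insert e F)
    then obtain u v where "e = {u, v}" "u \<in> V" "v \<in> V" "simple_graph V F"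
      unfolding simple_graph_def by (metis card_2_iff insert_iff insert_subset)
    then show ?case
      using insert kappa_insert_edge[of V u v F] unfolding simple_graph_def by simp
  qed
qed

lemma monomial_telescope:
  fixes x y :: "'a::comm_ring_1"
  shows "x^p * y^q = (1 - x*y) * (\<Sum>t<d. x^(p+t) * y^(q+t)) + x^(p+d) * y^(q+d)"
  by (induction d) (simp_all add: algebra_simps)

lemma varX_power_times_varY_power: "varX^p * varY^q = monom (monom 1 p) q"
proof -
  have X: "varX = monom (monom 1 1) 0" and Y: "varY = monom 1 1"
    by (simp_all add: varX_def varY_def monom_0 monom_Suc)
  show ?thesis
    by (simp add: X Y monom_power mult_monom)
qed

lemma coeff_varX_power_times_varY_power:
  "coeff (coeff (varX^p * varY^q) b) a = (if q = b \<and> p = a then 1 else 0)"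
  by (simp add: varX_power_times_varY_power coeff_monom)

lemma coeff_diagonal_sum:
  "coeff (coeff (\<Sum>t<d. varX^(p+t) * varY^(q+t)) b) a =
     (if p \<le> a \<and> a < p + d \<and> b = q + (a - p) then 1 else 0)"
proof -
  have "coeff (coeff (\<Sum>t<d. varX^(p+t) * varY^(q+t)) b) a =
      (\<Sum>t<d. if q + t = b \<and> p + t = a then 1 else 0)"
    by (simp add: coeff_sum coeff_varX_power_times_varY_power)
  also have "\<dots> = (\<Sum>t<d. if t = a - p then (if p \<le> a \<and> b = q + (a - p) then 1 else 0) else 0)"
  proof (rule sum.cong[OF refl])
    fix t
    have "(q + t = b \<and> p + t = a) \<longleftrightarrow> (t = a - p \<and> p \<le> a \<and> b = q + (a - p))"
      by arith
    then show "(if q + t = b \<and> p + t = a then 1 else 0) =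
      (if t = a - p then (if p \<le> a \<and> b = q + (a - p) then 1 else 0) else 0 :: real)"
      by simp
  qed
  finally show ?thesis
    by auto
qed

lemma one_minus_varX_varY_nonzero: "1 - varX * varY \<noteq> 0"
proof
  assume "1 - varX * varY = 0"
  then have "coeff (1 - varX * varY) 0 = 0"
    by simp
  then show False
    using varX_power_times_varY_power[of 1 1] by (simp add: coeff_monom)
qed

lemma Cnm_D:
  assumes "(V, E) \<in> Cnm n m"
  shows "simple_graph V E" "finite E" "card V = n" "card E = m" "kappa V E = 1" "1 \<le> n"
proof -
  show G: "simple_graph V E" "card V = n" "card E = m" "kappa V E = 1"
    using assms by (auto simp: Cnm_def)
  then show "finite E"
    unfolding simple_graph_def by (meson PowI finite_Pow_iff finite_subset subsetI)
  have "V \<noteq> {}"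
    using G(4) by (auto simp: kappa_def)
  then show "1 \<le> n"
    using G(1,2) by (auto simp: simple_graph_def Suc_le_eq card_gt_0_iff)
qed

lemma spanning_subgraph_D:
  assumes "(V, E) \<in> Cnm n m" "F \<subseteq> E"
  shows "1 \<le> kappa V F" "kappa V F \<le> n" "n \<le> card F + kappa V F" "card F \<le> m"
    and "rk V E - rk V F = kappa V F - 1"
proof -
  note G = Cnm_D[OF assms(1)]
  have "simple_graph V F"
    using G(1) assms(2) by (auto simp: simple_graph_def)
  then show "n \<le> card F + kappa V F"
    using card_le_card_edges_plus_kappa G(3) by blast
  have "finite V" "V \<noteq> {}"
    using G(1,3,6) by (auto simp: simple_graph_def)
  then show k1: "1 \<le> kappa V F" and k2: "kappa V F \<le> n"
    using kappa_pos kappa_le_card G(3) by blast+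
  show "card F \<le> m"
    using G(2,4) assms(2) card_mono by blast
  show "rk V E - rk V F = kappa V F - 1"
    using k1 k2 G(3,5) by (simp add: rk_def)
qed

text \<open>The polynomial \<open>T_G\<close>: the monomial of each \<open>F\<close> together with its diagonal successors
  strictly below \<open>x^n\<close>.\<close>
definition whitney_core :: "nat \<Rightarrow> nat set \<Rightarrow> nat set set \<Rightarrow> real poly poly" where
  "whitney_core n V E =
     (\<Sum>F\<in>Pow E. \<Sum>t < n + 1 - kappa V F. varX^(kappa V F - 1 + t) * varY^(cyc V F + t))"

lemma whitney_eq_core:
  assumes "(V, E) \<in> Cnm n m"
  shows "whitney V E = (1 - varX * varY) * whitney_core n V E + (\<Sum>F\<in>Pow E. varX^n * varY^(card F + 1))"
proof -
  have "varX^(rk V E - rk V F) * varY^(cyc V F) =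
      (1 - varX * varY) * (\<Sum>t < n + 1 - kappa V F. varX^(kappa V F - 1 + t) * varY^(cyc V F + t))
      + varX^n * varY^(card F + 1)" if "F \<subseteq> E" for F
  proof -
    note F = spanning_subgraph_D[OF assms that]
    have "kappa V F - 1 + (n + 1 - kappa V F) = n" "cyc V F + (n + 1 - kappa V F) = card F + 1"
      using F(1-3) Cnm_D(3)[OF assms] by (auto simp: cyc_def)
    then show ?thesis
      using monomial_telescope[of varX "kappa V F - 1" varY "cyc V F" "n + 1 - kappa V F"] F(5)
      by simp
  qed
  then show ?thesis
    unfolding whitney_def whitney_core_def sum_distrib_left sum.distrib[symmetric]
    by (intro sum.cong) auto
qed

lemma coeff_whitney_core:
  assumes "(V, E) \<in> Cnm n m"
  shows "coeff (coeff (whitney_core n V E) b) a = (if a < n then real (Nik (b + n - a - 1) (a + 1) V E) else 0)"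
proof -
  have "coeff (coeff (\<Sum>t < n + 1 - kappa V F. varX^(kappa V F - 1 + t) * varY^(cyc V F + t)) b) a =
      (if a < n \<and> card F = b + n - a - 1 \<and> kappa V F \<le> a + 1 then 1 else 0)" if "F \<subseteq> E" for F
  proof -
    note F = spanning_subgraph_D[OF assms that]
    have "(kappa V F - 1 \<le> a \<and> a < kappa V F - 1 + (n + 1 - kappa V F) \<and>
          b = cyc V F + (a - (kappa V F - 1)))
        \<longleftrightarrow> (a < n \<and> card F = b + n - a - 1 \<and> kappa V F \<le> a + 1)"
      using F(1-3) Cnm_D(3)[OF assms] unfolding cyc_def by arith
    then show ?thesis
      by (simp only: coeff_diagonal_sum)
  qed
  then have "coeff (coeff (whitney_core n V E) b) a =
      (\<Sum>F\<in>Pow E. if a < n \<and> card F = b + n - a - 1 \<and> kappa V F \<le> a + 1 then 1 else 0)"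
    unfolding whitney_core_def coeff_sum by (intro sum.cong) auto
  also have "\<dots> = (if a < n then real (Nik (b + n - a - 1) (a + 1) V E) else 0)"
    using Cnm_D(2)[OF assms] by (simp add: Nik_def sum.If_cases Int_def)
  finally show ?thesis .
qed

lemma sum_Pow_card_eq:
  assumes "finite A" "finite B" "card A = card B"
  shows "(\<Sum>X\<in>Pow A. f (card X)) = (\<Sum>X\<in>Pow B. f (card X))"
proof -
  obtain h where h: "bij_betw h A B"
    using finite_same_card_bij[OF assms] by auto
  have "(\<Sum>X\<in>Pow B. f (card X)) = (\<Sum>X\<in>Pow A. f (card (h ` X)))"
    using sum.reindex_bij_betw[OF bij_betw_image_Pow[OF h], of "\<lambda>X. f (card X)"] by simp
  also have "\<dots> = (\<Sum>X\<in>Pow A. f (card X))"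
  proof (rule sum.cong[OF refl])
    fix X assume "X \<in> Pow A"
    then have "inj_on h X"
      using h by (auto simp: bij_betw_def intro: inj_on_subset)
    then show "f (card (h ` X)) = f (card X)"
      by (simp add: card_image)
  qed
  finally show ?thesis
    by (rule sym)
qed

lemma whitney_diff_eq:
  assumes "(V, E) \<in> Cnm n m" "(V', E') \<in> Cnm n m"
  shows "whitney V E - whitney V' E' = (1 - varX * varY) * (whitney_core n V E - whitney_core n V' E')"
proof -
  have "(\<Sum>F\<in>Pow E. varX^n * varY^(card F + 1)) = (\<Sum>F\<in>Pow E'. varX^n * varY^(card F + 1))"
    using Cnm_D[OF assms(1)] Cnm_D[OF assms(2)] by (intro sum_Pow_card_eq) auto
  then show ?thesis
    using whitney_eq_core[OF assms(1)] whitney_eq_core[OF assms(2)] by (simp add: algebra_simps)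
qed

lemma Nik_eq_0_if_too_many_edges:
  assumes "(V, E) \<in> Cnm n m" "m < i"
  shows "Nik i k V E = 0"
proof -
  have "card F \<noteq> i" if "F \<subseteq> E" for F
    using spanning_subgraph_D(4)[OF assms(1) that] assms(2) by simp
  then have none: "{F \<in> Pow E. card F = i \<and> kappa V F \<le> k} = {}"
    by blast
  show ?thesis
    unfolding Nik_def none by simp
qed

lemma Nik_eq_0_if_too_few_edges:
  assumes "(V, E) \<in> Cnm n m" "i + k < n"
  shows "Nik i k V E = 0"
proof -
  have "\<not> (card F = i \<and> kappa V F \<le> k)" if "F \<subseteq> E" for F
    using spanning_subgraph_D(3)[OF assms(1) that] assms(2) by linarith
  then have none: "{F \<in> Pow E. card F = i \<and> kappa V F \<le> k} = {}"
    by blast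
  show ?thesis
    unfolding Nik_def none by simp
qed

lemma Nik_dominance_iff_diagonal_form:
  assumes H: "(V', E') \<in> Cnm n m"
  shows "(\<forall>i \<in> {0..m}. \<forall>k \<in> {1..n}. Nik i k V' E' \<le> Nik i k V E) \<longleftrightarrow>
    (\<forall>b a. a < n \<longrightarrow> Nik (b + n - a - 1) (a + 1) V' E' \<le> Nik (b + n - a - 1) (a + 1) V E)"
proof
  assume counts: "\<forall>i \<in> {0..m}. \<forall>k \<in> {1..n}. Nik i k V' E' \<le> Nik i k V E"
  show "\<forall>b a. a < n \<longrightarrow> Nik (b + n - a - 1) (a + 1) V' E' \<le> Nik (b + n - a - 1) (a + 1) V E"
  proof (intro allI impI)
    fix b a assume "a < n"
    show "Nik (b + n - a - 1) (a + 1) V' E' \<le> Nik (b + n - a - 1) (a + 1) V E"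
    proof (cases "b + n - a - 1 \<le> m")
      case True
      then show ?thesis
        using counts \<open>a < n\<close> by auto
    next
      case False
      then show ?thesis
        using Nik_eq_0_if_too_many_edges[OF H] by simp
    qed
  qed
next
  assume coeffs: "\<forall>b a. a < n \<longrightarrow> Nik (b + n - a - 1) (a + 1) V' E' \<le> Nik (b + n - a - 1) (a + 1) V E"
  show "\<forall>i \<in> {0..m}. \<forall>k \<in> {1..n}. Nik i k V' E' \<le> Nik i k V E"
  proof (intro ballI)
    fix i k assume "k \<in> {1..n}"
    show "Nik i k V' E' \<le> Nik i k V E"
    proof (cases "i + k < n")
      case True
      then show ?thesis
        using Nik_eq_0_if_too_few_edges[OF H] by simp
    next
      case False
      with \<open>k \<in> {1..n}\<close> have "k - 1 < n" "i + k - n + n - (k - 1) - 1 = i" "k - 1 + 1 = k"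
        by auto
      then show ?thesis
        using coeffs[rule_format, of "k - 1" "i + k - n"] by metis
    qed
  qed
qed

lemma nonneg_poly2_core_diff_iff:
  assumes G: "(V, E) \<in> Cnm n m" and H: "(V', E') \<in> Cnm n m"
  shows "nonneg_poly2 (whitney_core n V E - whitney_core n V' E') \<longleftrightarrow>
    (\<forall>i \<in> {0..m}. \<forall>k \<in> {1..n}. Nik i k V' E' \<le> Nik i k V E)"
  unfolding Nik_dominance_iff_diagonal_form[OF H] nonneg_poly2_def
  by (simp add: coeff_diff coeff_whitney_core[OF G] coeff_whitney_core[OF H])

lemma whitney_dominates_iff_Nik_ge:
  assumes G: "(V, E) \<in> Cnm n m" and H: "(V', E') \<in> Cnm n m"
  shows "(\<exists>Q. nonneg_poly2 Q \<and> whitney V E - whitney V' E' = (1 - varX * varY) * Q) \<longleftrightarrow>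
    (\<forall>i \<in> {0..m}. \<forall>k \<in> {1..n}. Nik i k V' E' \<le> Nik i k V E)"
  unfolding whitney_diff_eq[OF G H] nonneg_poly2_core_diff_iff[OF G H, symmetric]
  using one_minus_varX_varY_nonzero by auto

theorem mainTheorem5:
  fixes n m :: nat and V :: "nat set" and E :: "nat set set"
  assumes "(V, E) \<in> Cnm n m"
  shows "whitney_maximum n m V E \<longleftrightarrow> strong n m V E"
  unfolding whitney_maximum_def strong_def
  using assms by (simp add: Ball_def whitney_dominates_iff_Nik_ge cong: imp_cong)

end
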